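(* Let $G$ be an infinite finitely generated residually finite group, $S$ a finite symmetric generating set, and $(X_n)_{n\ge0}$ the lazy random walk on $\mathrm{Cay}(G,S)$. Suppose there is a sequence of positive numbers $(p_k)_{k\ge2}$ with $\sum_{k\ge2}p_k<\infty$ and $\mathbb{P}(X_n\in\Lambda_k\setminus\{e\})\le p_k$ for all $n\ge1$ and $k\ge2$. Then $$\lim_{n\to\infty}\mathbb{E}[D_G(X_n)]=2+\sum_{k\ge2}\frac{1}{[G:\Lambda_k]}<\infty.$$
   Context: For $g\ne e$, $D_G(g)=\min\{[G:N]: N\lhd G\text{ of finite index},\ g\notin N\}$, and $D_G(e)=0$. For $k\ge2$, $\Lambda_k$ is the intersection of all normal subgroups of $G$ of index at most $k$. The lazy random walk on $\mathrm{Cay}(G,S)$ is the Markov chain with $X_0=e$ and transition matrix $\frac12 I+\frac12P$, where $P(x,y)=\frac1{|S|}\#\{s\in S:y=xs\}$. *)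

theory Defs
  imports "HOL-Algebra.Algebra" "HOL-Probability.Probability"
begin

definition fin_index_normal :: "('a, 'b) monoid_scheme \<Rightarrow> 'a set \<Rightarrow> bool" where
  "fin_index_normal G N \<longleftrightarrow> N \<lhd> G \<and> finite (rcosets\<^bsub>G\<^esub> N)"

definition residually_finite :: "('a, 'b) monoid_scheme \<Rightarrow> bool" where
  "residually_finite G \<longleftrightarrow>
     (\<forall>g\<in>carrier G. g \<noteq> \<one>\<^bsub>G\<^esub> \<longrightarrow> (\<exists>N. fin_index_normal G N \<and> g \<notin> N))"

definition depth :: "('a, 'b) monoid_scheme \<Rightarrow> 'a \<Rightarrow> nat" where
  "depth G g = (if g = \<one>\<^bsub>G\<^esub> then 0
     else Inf {card (rcosets\<^bsub>G\<^esub> N) | N. fin_index_normal G N \<and> g \<notin> N})"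

definition Lambda :: "('a, 'b) monoid_scheme \<Rightarrow> nat \<Rightarrow> 'a set" where
  "Lambda G k = \<Inter> {N. fin_index_normal G N \<and> card (rcosets\<^bsub>G\<^esub> N) \<le> k}"

text \<open>Distribution of X_n for the lazy random walk on Cay(G,S), started at e:
  with probability 1/2 stay, with probability 1/2 move to x s with s uniform in S.\<close>
primrec lazy_walk :: "('a, 'b) monoid_scheme \<Rightarrow> 'a set \<Rightarrow> nat \<Rightarrow> 'a pmf" where
  "lazy_walk G S 0 = return_pmf \<one>\<^bsub>G\<^esub>"
| "lazy_walk G S (Suc n) = bind_pmf (lazy_walk G S n) (\<lambda>x.
      bind_pmf (bernoulli_pmf (1/2)) (\<lambda>b. if b then return_pmf x
          else map_pmf (\<lambda>s. x \<otimes>\<^bsub>G\<^esub> s) (pmf_of_set S)))"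

end

theory Submission
  imports Defs
begin

(* For a subgroup H of finite index, the quadratic energy sum_C P(X_n \<in> C)^2 of the walk
   projected to the right cosets of H decreases at each step by a multiple of the Dirichlet sum
   sum_{C,s} (P(X_n \<in> C) - P(X_n \<in> C s^-1))^2. Hence the Dirichlet sum tends to 0, and since S
   generates G all cosets receive asymptotically equal mass: P(X_n \<in> H) \<rightarrow> 1/[G:H].
   An intersection of finite-index normal subgroups that has infinite index lies in finite-index
   ones of arbitrarily large index, so there the limit is 0; by residual finiteness this gives
   P(X_n = e) \<rightarrow> 0. Finally D_G(g) > k iff g \<in> \<Lambda>_k - {e}, so
   E[D_G(X_n)] = 2 P(X_n \<noteq> e) + sum_{k\<ge>2} P(X_n \<in> \<Lambda>_k - {e}), and the summable bound p_k lets
   Tannery's theorem pass to the limit termwise. *)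

lemma measure_bind_pmf_eq_integral:
  "measure_pmf.prob (bind_pmf q f) A = (\<integral>x. measure_pmf.prob (f x) A \<partial>measure_pmf q)"
  unfolding measure_pmf_bind
  by (rule measure_pmf.measure_bind[where N="count_space UNIV"])
     (auto simp: measurable_measure_pmf space_subprob_algebra subprob_space_measure_pmf)

lemma measure_pmf_prob_eq_sum:
  assumes "finite A" "set_pmf p \<subseteq> A"
  shows "measure_pmf.prob p D = (\<Sum>a\<in>A. indicator D a * pmf p a)"
proof -
  have "measure_pmf.prob p D = (\<integral>x. indicator D x \<partial>measure_pmf p)" by simp
  also have "\<dots> = (\<Sum>a\<in>A. indicator D a * pmf p a)"
    using assms by (intro integral_measure_pmf_real) auto
  finally show ?thesis .
qed

lemma prob_gt_sums_expectation_nat: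
  fixes f :: "'a \<Rightarrow> nat"
  assumes fin: "finite (set_pmf p)"
  shows "(\<lambda>k. measure_pmf.prob p {x. k < f x}) sums measure_pmf.expectation p (\<lambda>x. real (f x))"
proof -
  let ?A = "set_pmf p"
  define N where "N = Max (insert 0 (f ` ?A))"
  have fN: "f a \<le> N" if "a \<in> ?A" for a
    unfolding N_def using fin that by (intro Max_ge) auto
  have "measure_pmf.expectation p (\<lambda>x. real (f x)) = (\<Sum>a\<in>?A. real (f a) * pmf p a)"
    using fin by (intro integral_measure_pmf_real) auto
  also have "\<dots> = (\<Sum>a\<in>?A. (\<Sum>k<N. indicator {x. k < f x} a) * pmf p a)"
  proof (intro sum.cong refl)
    fix a assume "a \<in> ?A"
    then have "(\<Sum>k<N. indicator {x. k < f x} a :: real) = (\<Sum>k<f a. 1)"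
      using fN by (intro sum.mono_neutral_cong_right) (auto simp: indicator_def)
    then show "real (f a) * pmf p a = (\<Sum>k<N. indicator {x. k < f x} a) * pmf p a" by simp
  qed
  also have "\<dots> = (\<Sum>k<N. \<Sum>a\<in>?A. indicator {x. k < f x} a * pmf p a)"
    unfolding sum_distrib_right by (rule sum.swap)
  also have "\<dots> = (\<Sum>k<N. measure_pmf.prob p {x. k < f x})"
    using fin by (simp add: measure_pmf_prob_eq_sum)
  finally have "measure_pmf.expectation p (\<lambda>x. real (f x)) = \<dots>" .
  moreover have "measure_pmf.prob p {x. k < f x} = 0" if "k \<notin> {..<N}" for k
    using fN that by (force simp: measure_pmf_zero_iff)
  ultimately show ?thesis by (metis sums_finite finite_lessThan)
qed

lemma ex_finite_subfamily_disjoint: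
  assumes "finite P" "P \<inter> \<Inter>F = {}"
  shows "\<exists>NN\<subseteq>F. finite NN \<and> P \<inter> \<Inter>NN = {}"
proof -
  have "\<forall>x\<in>P. \<exists>N\<in>F. x \<notin> N" using assms(2) by blast
  then obtain sep where "\<And>x. x \<in> P \<Longrightarrow> sep x \<in> F \<and> x \<notin> sep x" by metis
  then show ?thesis using assms(1) by (intro exI[of _ "sep ` P"]) auto
qed

context group
begin

lemma mult_mem_iff_mem_r_coset_inv:
  assumes "C \<subseteq> carrier G" "x \<in> carrier G" "s \<in> carrier G"
  shows "x \<otimes> s \<in> C \<longleftrightarrow> x \<in> C #> inv s"
proof -
  have "x \<in> C #> inv s \<longleftrightarrow> (\<exists>c\<in>C. x = c \<otimes> inv s)" unfolding r_coset_def by blast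
  also have "\<dots> \<longleftrightarrow> (\<exists>c\<in>C. c = x \<otimes> s)"
    using assms inv_solve_right by blast
  finally show ?thesis by auto
qed

lemma r_coset_eq_iff:
  assumes "subgroup H G" "x \<in> carrier G" "y \<in> carrier G"
  shows "H #> x = H #> y \<longleftrightarrow> x \<otimes> inv y \<in> H"
proof
  assume "H #> x = H #> y"
  then show "x \<otimes> inv y \<in> H"
    using rcos_self[OF assms(2,1)] subgroup.rcos_module[OF assms(1) is_group assms(3,2)] by simp
next
  assume "x \<otimes> inv y \<in> H"
  then have "x \<in> H #> y" using subgroup.rcos_module[OF assms(1) is_group assms(3,2)] by simp
  then show "H #> x = H #> y" using repr_independence[OF _ assms(3,1)] by simp
qed

lemma r_coset_in_rcosets:
  assumes "subgroup H G" "C \<in> rcosets H" "t \<in> carrier G"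
  shows "C #> t \<in> rcosets H"
proof -
  obtain g where g: "g \<in> carrier G" "C = H #> g" using assms(2) unfolding RCOSETS_def by blast
  then have "C #> t = H #> (g \<otimes> t)"
    using assms(3) subgroup.subset[OF assms(1)] by (simp add: coset_mult_assoc)
  then show ?thesis using g assms(3) subgroup.subset[OF assms(1)] by (simp add: rcosetsI)
qed

lemma bij_betw_r_coset_rcosets:
  assumes "subgroup H G" "t \<in> carrier G"
  shows "bij_betw (\<lambda>C. C #> t) (rcosets H) (rcosets H)"
proof (rule bij_betw_byWitness[where f'="\<lambda>C. C #> inv t"])
  have "C \<subseteq> carrier G" if "C \<in> rcosets H" for C
    using that subgroup.rcosets_carrier[OF assms(1) is_group] by blast
  then show "\<forall>C\<in>rcosets H. C #> t #> inv t = C" "\<forall>C\<in>rcosets H. C #> inv t #> t = C"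
    using assms(2) by (simp_all add: coset_mult_assoc)
qed (use assms r_coset_in_rcosets in auto)

lemma rcosets_carrier: "rcosets (carrier G) = {carrier G}"
  using subgroup.rcos_const[OF subgroup_self is_group] unfolding RCOSETS_def by auto

lemma fin_index_normal_carrier: "fin_index_normal G (carrier G)"
  unfolding fin_index_normal_def using normal_self rcosets_carrier by simp

lemma r_coset_Int:
  assumes "subgroup A G" "subgroup B G" "x \<in> carrier G"
  shows "(A \<inter> B) #> x = (A #> x) \<inter> (B #> x)"
proof (intro equalityI subsetI)
  fix y assume y: "y \<in> (A #> x) \<inter> (B #> x)"
  then have "y \<in> carrier G" using assms r_coset_subset_G subgroup.subset by blast
  then show "y \<in> (A \<inter> B) #> x"
    using y subgroup.rcos_module[OF _ is_group assms(3)] assms subgroup_Int by blast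
qed (auto simp: r_coset_def)

lemma fin_index_normal_Int:
  assumes "fin_index_normal G A" "fin_index_normal G B"
  shows "fin_index_normal G (A \<inter> B)"
proof -
  have A: "subgroup A G" "finite (rcosets A)" and B: "subgroup B G" "finite (rcosets B)"
    using assms normal_imp_subgroup unfolding fin_index_normal_def by auto
  have "rcosets (A \<inter> B) \<subseteq> (\<lambda>(P, Q). P \<inter> Q) ` ((rcosets A) \<times> (rcosets B))"
  proof
    fix C assume "C \<in> rcosets (A \<inter> B)"
    then obtain x where x: "x \<in> carrier G" "C = (A \<inter> B) #> x" unfolding RCOSETS_def by blast
    then have "C = (\<lambda>(P, Q). P \<inter> Q) (A #> x, B #> x)" using r_coset_Int A(1) B(1) by simp
    moreover have "(A #> x, B #> x) \<in> (rcosets A) \<times> (rcosets B)"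
      using x A(1) B(1) subgroup.subset by (auto intro: rcosetsI)
    ultimately show "C \<in> (\<lambda>(P, Q). P \<inter> Q) ` ((rcosets A) \<times> (rcosets B))" by blast
  qed
  then have "finite (rcosets (A \<inter> B))"
    using A(2) B(2) by (meson finite_SigmaI finite_imageI finite_subset)
  then show ?thesis
    using assms normal_subgroup_intersect unfolding fin_index_normal_def by blast
qed

lemma fin_index_normal_Inter:
  assumes "finite NN" "\<And>N. N \<in> NN \<Longrightarrow> fin_index_normal G N"
  shows "fin_index_normal G (carrier G \<inter> \<Inter>NN)"
  using assms
proof (induction NN rule: finite_induct)
  case empty
  then show ?case using fin_index_normal_carrier by simp
next
  case (insert N NN)
  have "carrier G \<inter> \<Inter>(insert N NN) = N \<inter> (carrier G \<inter> \<Inter>NN)" by auto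
  then show ?case using insert fin_index_normal_Int by simp
qed

lemma normal_Inter:
  assumes "F \<noteq> {}" "\<And>N. N \<in> F \<Longrightarrow> N \<lhd> G"
  shows "\<Inter>F \<lhd> G"
  unfolding normal_inv_iff
proof (intro conjI ballI)
  show "subgroup (\<Inter>F) G" using assms normal_imp_subgroup by (intro subgroups_Inter) auto
  show "x \<otimes> h \<otimes> inv x \<in> \<Inter>F" if "x \<in> carrier G" "h \<in> \<Inter>F" for x h
    using that normal.inv_op_closed2[OF assms(2)] by blast
qed

lemma carrier_subset_fin_index_normal:
  assumes "fin_index_normal G N" "card (rcosets N) \<le> 1"
  shows "carrier G \<subseteq> N"
proof
  fix g assume g: "g \<in> carrier G"
  have N: "subgroup N G" "finite (rcosets N)"
    using assms(1) normal_imp_subgroup unfolding fin_index_normal_def by auto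
  have "N \<in> rcosets N" "N #> g \<in> rcosets N"
    using subgroup.subgroup_in_rcosets[OF N(1) is_group] rcosetsI[OF subgroup.subset[OF N(1)] g]
    by auto
  then have "N #> g = N" using card_le_Suc0_iff_eq[OF N(2)] assms(2) by auto
  then show "g \<in> N" using rcos_self[OF g N(1)] by simp
qed

lemma carrier_subset_Lambda: "k \<le> 1 \<Longrightarrow> carrier G \<subseteq> Lambda G k"
  unfolding Lambda_def using carrier_subset_fin_index_normal by fastforce

lemma one_in_Lambda: "\<one> \<in> Lambda G k"
  unfolding Lambda_def fin_index_normal_def using normal_imp_subgroup subgroup.one_closed by blast

lemma depth_gt_iff:
  assumes "residually_finite G" "g \<in> carrier G"
  shows "k < depth G g \<longleftrightarrow> g \<noteq> \<one> \<and> g \<in> Lambda G k"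
proof (cases "g = \<one>")
  case False
  define I where "I = {card (rcosets N) | N. fin_index_normal G N \<and> g \<notin> N}"
  have depth: "depth G g = Inf I" unfolding depth_def I_def using False by simp
  have "I \<noteq> {}" using assms False unfolding residually_finite_def I_def by blast
  then have "Inf I \<in> I" by (rule Inf_nat_def1)
  then obtain N where N: "fin_index_normal G N" "g \<notin> N" "depth G g = card (rcosets N)"
    unfolding depth I_def by blast
  have le: "depth G g \<le> card (rcosets M)" if "fin_index_normal G M" "g \<notin> M" for M
  proof -
    have "card (rcosets M) \<in> I" unfolding I_def using that by blast
    then show ?thesis unfolding depth by (rule wellorder_Inf_le1)
  qed
  show ?thesis
  proof
    assume gt: "k < depth G g"
    have "g \<in> M" if "fin_index_normal G M" "card (rcosets M) \<le> k" for M
    proof (rule ccontr)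
      assume "g \<notin> M"
      then show False using le[OF that(1)] that(2) gt by linarith
    qed
    then show "g \<noteq> \<one> \<and> g \<in> Lambda G k" using False unfolding Lambda_def by blast
  next
    assume "g \<noteq> \<one> \<and> g \<in> Lambda G k"
    then have "\<not> card (rcosets N) \<le> k" using N(1,2) unfolding Lambda_def by blast
    then show "k < depth G g" using N(3) by simp
  qed
qed (simp add: depth_def)

lemma Inter_fin_index_normal_eq_one:
  assumes "residually_finite G"
  shows "\<Inter>{N. fin_index_normal G N} = {\<one>}"
proof (intro equalityI subsetI)
  fix x assume x: "x \<in> \<Inter>{N. fin_index_normal G N}"
  then have "x \<in> carrier G" using fin_index_normal_carrier by blast
  then show "x \<in> {\<one>}" using x assms unfolding residually_finite_def by blast
qed (auto simp: fin_index_normal_def dest: normal_imp_subgroup subgroup.one_closed)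

lemma infinite_rcosets_one:
  assumes "infinite (carrier G)"
  shows "infinite (rcosets {\<one>})"
proof
  assume fin: "finite (rcosets {\<one>})"
  have "(\<lambda>x. {x}) ` carrier G \<subseteq> rcosets {\<one>}"
    using rcosetsI[of "{\<one>}"] by (auto simp: r_coset_def)
  then have "finite ((\<lambda>x. {x}) ` carrier G)" using fin by (rule finite_subset)
  then show False using assms by (simp add: finite_image_iff)
qed

lemma inj_on_r_coset_iff:
  assumes "subgroup K G" "T \<subseteq> carrier G"
  shows "inj_on (\<lambda>x. K #> x) T \<longleftrightarrow> (\<forall>x\<in>T. \<forall>y\<in>T. x \<otimes> inv y \<in> K \<longrightarrow> x = y)"
  using r_coset_eq_iff[OF assms(1)] assms(2) unfolding inj_on_def by blast

lemma ex_inj_on_r_coset: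
  assumes "infinite (rcosets K)"
  shows "\<exists>T\<subseteq>carrier G. finite T \<and> card T = M \<and> inj_on (\<lambda>x. K #> x) T"
proof -
  obtain Cs where Cs: "Cs \<subseteq> rcosets K" "finite Cs" "card Cs = M"
    using infinite_arbitrarily_large[OF assms] by blast
  moreover have "rcosets K = (\<lambda>x. K #> x) ` carrier G" unfolding RCOSETS_def by blast
  ultimately have "Cs \<subseteq> (\<lambda>x. K #> x) ` carrier G" by simp
  then obtain T where T: "T \<subseteq> carrier G" "inj_on (\<lambda>x. K #> x) T" "Cs = (\<lambda>x. K #> x) ` T"
    unfolding subset_image_inj by blast
  then show ?thesis using Cs(2,3) by (metis card_image finite_image_iff)
qed

lemma ex_fin_index_normal_index_ge:
  assumes F: "\<And>N. N \<in> F \<Longrightarrow> fin_index_normal G N" "carrier G \<in> F"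
    and inf: "infinite (rcosets (\<Inter>F))"
  shows "\<exists>H. fin_index_normal G H \<and> \<Inter>F \<subseteq> H \<and> M \<le> card (rcosets H)"
proof -
  let ?K = "\<Inter>F"
  have K: "subgroup ?K G"
    using F normal_Inter normal_imp_subgroup unfolding fin_index_normal_def by blast
  obtain T where T: "T \<subseteq> carrier G" "finite T" "card T = M" "inj_on (\<lambda>x. ?K #> x) T"
    using ex_inj_on_r_coset[OF inf] by blast
  define P where "P = {x \<otimes> inv y | x y. x \<in> T \<and> y \<in> T \<and> x \<noteq> y}"
  have "P \<subseteq> (\<lambda>(x, y). x \<otimes> inv y) ` (T \<times> T)" unfolding P_def by auto
  then have finP: "finite P" using finite_subset T(2) by blast
  have disjP: "P \<inter> ?K = {}"
    using T(4) inj_on_r_coset_iff[OF K T(1)] unfolding P_def by blast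
  obtain NN where NN: "NN \<subseteq> F" "finite NN" "P \<inter> \<Inter>NN = {}"
    using ex_finite_subfamily_disjoint[OF finP disjP] by blast
  define H where "H = carrier G \<inter> \<Inter>NN"
  have H: "fin_index_normal G H" unfolding H_def using fin_index_normal_Inter NN F(1) by blast
  then have sH: "subgroup H G" "finite (rcosets H)"
    using normal_imp_subgroup unfolding fin_index_normal_def by auto
  have "inj_on (\<lambda>x. H #> x) T"
    using NN(3) inj_on_r_coset_iff[OF sH(1) T(1)] unfolding H_def P_def by blast
  moreover have "(\<lambda>x. H #> x) ` T \<subseteq> rcosets H"
    using T(1) subgroup.subset[OF sH(1)] by (auto intro: rcosetsI)
  ultimately have "M \<le> card (rcosets H)" using card_inj_on_le sH(2) T(3) by metis
  moreover have "?K \<subseteq> H" unfolding H_def using NN(1) F(2) by blast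
  ultimately show ?thesis using H by blast
qed

end

locale lazy_walk_setting = group G for G (structure) +
  fixes S :: "'a set"
  assumes finite_S: "finite S" and S_subset: "S \<subseteq> carrier G" and S_nonempty: "S \<noteq> {}"
    and inv_S: "\<And>s. s \<in> S \<Longrightarrow> inv s \<in> S"
    and generate_S: "generate G S = carrier G"
begin

lemma card_S_pos: "0 < card S"
  using finite_S S_nonempty by (simp add: card_gt_0_iff)

definition lazy_step :: "'a \<Rightarrow> 'a pmf" where
  "lazy_step x = bind_pmf (bernoulli_pmf (1/2))
     (\<lambda>b. if b then return_pmf x else map_pmf (\<lambda>s. x \<otimes> s) (pmf_of_set S))"

lemma lazy_walk_Suc: "lazy_walk G S (Suc n) = bind_pmf (lazy_walk G S n) lazy_step"
  unfolding lazy_step_def[abs_def] by simp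

abbreviation walk_prob :: "nat \<Rightarrow> 'a set \<Rightarrow> real" where
  "walk_prob n C \<equiv> measure_pmf.prob (lazy_walk G S n) C"

lemma set_lazy_step: "set_pmf (lazy_step x) = insert x ((\<lambda>s. x \<otimes> s) ` S)"
  using finite_S S_nonempty by (auto simp: lazy_step_def set_bind_pmf UNIV_bool)

lemma set_lazy_walk: "set_pmf (lazy_walk G S n) \<subseteq> carrier G"
proof (induction n)
  case (Suc n)
  then show ?case
    using S_subset by (auto simp only: lazy_walk_Suc set_bind_pmf set_lazy_step)
qed simp

lemma finite_set_lazy_walk: "finite (set_pmf (lazy_walk G S n))"
proof (induction n)
  case (Suc n)
  then show ?case
    using finite_S by (simp only: lazy_walk_Suc set_bind_pmf set_lazy_step) auto
qed simp

lemma walk_prob_Int_carrier: "walk_prob n (D \<inter> carrier G) = walk_prob n D"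
proof -
  have "D \<inter> carrier G \<inter> set_pmf (lazy_walk G S n) = D \<inter> set_pmf (lazy_walk G S n)"
    using set_lazy_walk by blast
  then show ?thesis by (metis measure_Int_set_pmf)
qed

lemma walk_prob_carrier: "walk_prob n (carrier G) = 1"
  using walk_prob_Int_carrier[of n UNIV] by simp

lemma prob_lazy_step:
  assumes "x \<in> carrier G" "C \<subseteq> carrier G"
  shows "measure_pmf.prob (lazy_step x) C
     = indicator C x / 2 + (\<Sum>s\<in>S. indicator (C #> inv s) x) / (2 * card S)"
proof -
  have "(\<Sum>s\<in>S. indicator (C #> inv s) x) = (\<Sum>s\<in>S. if x \<otimes> s \<in> C then 1 else 0 :: real)"
    using mult_mem_iff_mem_r_coset_inv[OF assms(2,1)] S_subset
    by (intro sum.cong refl) (auto simp: indicator_def)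
  also have "\<dots> = real (card (S \<inter> (\<lambda>s. x \<otimes> s) -` C))"
    using finite_S by (simp add: sum.If_cases Int_def)
  finally have "real (card (S \<inter> (\<lambda>s. x \<otimes> s) -` C)) = (\<Sum>s\<in>S. indicator (C #> inv s) x)" ..
  then show ?thesis
    using finite_S S_nonempty
    by (simp add: lazy_step_def measure_bind_pmf_eq_integral measure_pmf_of_set field_simps)
qed

lemma walk_prob_Suc:
  assumes "C \<subseteq> carrier G"
  shows "walk_prob (Suc n) C
     = walk_prob n C / 2 + (\<Sum>s\<in>S. walk_prob n (C #> inv s)) / (2 * card S)"
proof -
  let ?p = "lazy_walk G S n"
  let ?A = "set_pmf ?p"
  have A: "finite ?A" "?A \<subseteq> carrier G" using finite_set_lazy_walk set_lazy_walk by auto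
  have "walk_prob (Suc n) C = (\<integral>x. measure_pmf.prob (lazy_step x) C \<partial>measure_pmf ?p)"
    by (simp only: lazy_walk_Suc measure_bind_pmf_eq_integral)
  also have "\<dots> = (\<Sum>a\<in>?A. measure_pmf.prob (lazy_step a) C * pmf ?p a)"
    using A(1) by (intro integral_measure_pmf_real) auto
  also have "\<dots> = (\<Sum>a\<in>?A. indicator C a * pmf ?p a / 2
       + (\<Sum>s\<in>S. indicator (C #> inv s) a * pmf ?p a) / (2 * card S))"
  proof (intro sum.cong refl)
    fix a assume "a \<in> ?A"
    then have "a \<in> carrier G" using A(2) by blast
    then show "measure_pmf.prob (lazy_step a) C * pmf ?p a = indicator C a * pmf ?p a / 2
       + (\<Sum>s\<in>S. indicator (C #> inv s) a * pmf ?p a) / (2 * card S)"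
      by (simp add: prob_lazy_step[OF _ assms] sum_distrib_left sum_distrib_right field_simps)
  qed
  also have "\<dots> = (\<Sum>a\<in>?A. indicator C a * pmf ?p a) / 2
       + (\<Sum>a\<in>?A. \<Sum>s\<in>S. indicator (C #> inv s) a * pmf ?p a) / (2 * card S)"
    by (simp add: sum.distrib sum_divide_distrib)
  also have "(\<Sum>a\<in>?A. \<Sum>s\<in>S. indicator (C #> inv s) a * pmf ?p a)
     = (\<Sum>s\<in>S. \<Sum>a\<in>?A. indicator (C #> inv s) a * pmf ?p a)"
    by (rule sum.swap)
  finally show ?thesis using measure_pmf_prob_eq_sum[OF A(1) order_refl] by simp
qed

lemma walk_prob_Suc_sq_le:
  assumes "C \<subseteq> carrier G"
  shows "(walk_prob (Suc n) C)\<^sup>2 \<le> (\<Sum>s\<in>S. ((walk_prob n C)\<^sup>2 + (walk_prob n (C #> inv s))\<^sup>2) / 2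
      - (walk_prob n C - walk_prob n (C #> inv s))\<^sup>2 / 4) / card S"
proof -
  define k where "k = real (card S)"
  have k: "k > 0" unfolding k_def using card_S_pos by simp
  let ?mid = "\<lambda>s. (walk_prob n C + walk_prob n (C #> inv s)) / 2"
  have "walk_prob (Suc n) C = (\<Sum>s\<in>S. ?mid s) / k"
    using walk_prob_Suc[OF assms, of n] k unfolding k_def
    by (simp add: sum.distrib sum_divide_distrib[symmetric] field_simps)
  then have "(walk_prob (Suc n) C)\<^sup>2 = (\<Sum>s\<in>S. ?mid s)\<^sup>2 / k\<^sup>2"
    by (simp add: power_divide)
  also have "\<dots> \<le> (\<Sum>s\<in>S. (?mid s)\<^sup>2) * k / k\<^sup>2"
    unfolding k_def by (intro divide_right_mono sum_squared_le_sum_of_squares) simp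
  also have "\<dots> = (\<Sum>s\<in>S. (?mid s)\<^sup>2) / k"
    using k by (simp add: power2_eq_square)
  also have "(\<Sum>s\<in>S. (?mid s)\<^sup>2) = (\<Sum>s\<in>S. ((walk_prob n C)\<^sup>2 + (walk_prob n (C #> inv s))\<^sup>2) / 2
      - (walk_prob n C - walk_prob n (C #> inv s))\<^sup>2 / 4)"
    by (intro sum.cong refl) (simp add: power2_eq_square field_simps)
  finally show ?thesis unfolding k_def .
qed

context
  fixes H assumes H: "subgroup H G" "finite (rcosets H)"
begin

lemma rcosets_subset_carrier: "C \<in> rcosets H \<Longrightarrow> C \<subseteq> carrier G"
  using subgroup.rcosets_carrier[OF H(1) is_group] by blast

lemma sum_walk_prob_rcosets: "(\<Sum>C\<in>rcosets H. walk_prob n C) = 1"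
proof -
  have "(\<Sum>C\<in>rcosets H. walk_prob n C) = walk_prob n (\<Union>C\<in>rcosets H. C)"
  proof (rule measure_pmf.finite_measure_finite_Union[symmetric])
    show "disjoint_family_on (\<lambda>C. C) (rcosets H)"
      using rcos_disjoint[OF H(1)] unfolding disjoint_family_on_def pairwise_def disjnt_def by blast
  qed (use H(2) in auto)
  then show ?thesis using rcosets_part_G[OF H(1)] walk_prob_carrier by simp
qed

definition coset_energy :: "nat \<Rightarrow> real" where
  "coset_energy n = (\<Sum>C\<in>rcosets H. (walk_prob n C)\<^sup>2)"

definition coset_dirichlet :: "nat \<Rightarrow> real" where
  "coset_dirichlet n = (\<Sum>C\<in>rcosets H. \<Sum>s\<in>S. (walk_prob n C - walk_prob n (C #> inv s))\<^sup>2)"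

lemma coset_energy_Suc_le: "coset_energy (Suc n) \<le> coset_energy n - coset_dirichlet n / (4 * card S)"
proof -
  define k where "k = real (card S)"
  have k: "k > 0" unfolding k_def using card_S_pos by simp
  have shift: "(\<Sum>C\<in>rcosets H. (walk_prob n (C #> inv s))\<^sup>2) = coset_energy n" if "s \<in> S" for s
    unfolding coset_energy_def using that S_subset
    by (intro sum.reindex_bij_betw[of "\<lambda>C. C #> inv s"] bij_betw_r_coset_rcosets[OF H(1)]) auto
  have "coset_energy (Suc n) \<le> (\<Sum>C\<in>rcosets H. (\<Sum>s\<in>S. ((walk_prob n C)\<^sup>2
      + (walk_prob n (C #> inv s))\<^sup>2) / 2 - (walk_prob n C - walk_prob n (C #> inv s))\<^sup>2 / 4) / k)"
    unfolding coset_energy_def k_def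
    by (intro sum_mono walk_prob_Suc_sq_le rcosets_subset_carrier)
  also have "\<dots> = ((\<Sum>s\<in>S. \<Sum>C\<in>rcosets H. ((walk_prob n C)\<^sup>2 + (walk_prob n (C #> inv s))\<^sup>2) / 2)
        - coset_dirichlet n / 4) / k"
    unfolding coset_dirichlet_def
    by (simp add: sum_divide_distrib[symmetric] sum_subtractf sum.swap[of _ S])
  also have "(\<Sum>s\<in>S. \<Sum>C\<in>rcosets H. ((walk_prob n C)\<^sup>2 + (walk_prob n (C #> inv s))\<^sup>2) / 2)
      = k * coset_energy n"
    using shift unfolding k_def
    by (simp add: sum.distrib sum_divide_distrib[symmetric] coset_energy_def[symmetric])
  finally show ?thesis using k unfolding k_def by (simp add: field_simps)
qed

lemma coset_dirichlet_tendsto_zero: "coset_dirichlet \<longlonglongrightarrow> 0"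
proof -
  define c where "c = 4 * real (card S)"
  have c: "c > 0" unfolding c_def using card_S_pos by simp
  have nonneg: "0 \<le> coset_dirichlet n / c" for n
    unfolding coset_dirichlet_def using c by (intro divide_nonneg_pos sum_nonneg) auto
  have telescope: "(\<Sum>i<N. coset_dirichlet i / c) \<le> coset_energy 0 - coset_energy N" for N
  proof (induction N)
    case (Suc N)
    then show ?case using coset_energy_Suc_le[of N] unfolding c_def by simp
  qed simp
  have "summable (\<lambda>i. coset_dirichlet i / c)"
  proof (rule summableI_nonneg_bounded)
    have energy_nonneg: "0 \<le> coset_energy N" for N
      unfolding coset_energy_def by (intro sum_nonneg) simp
    show "(\<Sum>i<N. coset_dirichlet i / c) \<le> coset_energy 0" for N
      using telescope[of N] energy_nonneg[of N] by linarith
  qed (rule nonneg)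
  then have "(\<lambda>i. coset_dirichlet i / c * c) \<longlonglongrightarrow> 0 * c"
    by (intro tendsto_mult_right summable_LIMSEQ_zero)
  then show ?thesis using c by simp
qed

lemma walk_prob_r_coset_inv_diff_tendsto:
  assumes C: "C \<in> rcosets H" and s: "s \<in> S"
  shows "(\<lambda>n. walk_prob n C - walk_prob n (C #> inv s)) \<longlonglongrightarrow> 0"
proof (rule Lim_null_comparison)
  have "(walk_prob n C - walk_prob n (C #> inv s))\<^sup>2 \<le> coset_dirichlet n" for n
  proof -
    have "(walk_prob n C - walk_prob n (C #> inv s))\<^sup>2
        \<le> (\<Sum>s\<in>S. (walk_prob n C - walk_prob n (C #> inv s))\<^sup>2)"
      by (rule member_le_sum[OF s _ finite_S]) simp
    also have "\<dots> \<le> coset_dirichlet n"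
      unfolding coset_dirichlet_def
      by (rule member_le_sum[OF C _ H(2)]) (intro sum_nonneg, simp)
    finally show ?thesis .
  qed
  then show "\<forall>\<^sub>F n in sequentially. norm (walk_prob n C - walk_prob n (C #> inv s))
      \<le> sqrt (coset_dirichlet n)"
    by (intro always_eventually allI) (simp add: real_le_rsqrt)
  show "(\<lambda>n. sqrt (coset_dirichlet n)) \<longlonglongrightarrow> 0"
    using tendsto_real_sqrt[OF coset_dirichlet_tendsto_zero] by simp
qed

lemma walk_prob_r_coset_diff_tendsto:
  assumes C: "C \<in> rcosets H" and s: "s \<in> S"
  shows "(\<lambda>n. walk_prob n (C #> s) - walk_prob n C) \<longlonglongrightarrow> 0"
proof -
  have "s \<in> carrier G" using s S_subset by auto
  then have "C #> s \<in> rcosets H" "C #> s #> inv s = C"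
    using r_coset_in_rcosets[OF H(1) C] rcosets_subset_carrier[OF C] by (auto simp: coset_mult_assoc)
  then show ?thesis using walk_prob_r_coset_inv_diff_tendsto[of "C #> s" s] s by simp
qed

lemma walk_prob_r_coset_generate_tendsto:
  assumes "g \<in> generate G S"
  shows "\<forall>C\<in>rcosets H. (\<lambda>n. walk_prob n (C #> g) - walk_prob n C) \<longlonglongrightarrow> 0"
  using assms
proof (induction rule: generate.induct)
  case one
  then show ?case using rcosets_subset_carrier by simp
next
  case (incl h)
  then show ?case using walk_prob_r_coset_diff_tendsto by blast
next
  case (inv h)
  then show ?case using walk_prob_r_coset_diff_tendsto inv_S by blast
next
  case (eng h1 h2)
  have h: "h1 \<in> carrier G" "h2 \<in> carrier G"
    using eng.hyps generate_in_carrier S_subset by auto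
  show ?case
  proof
    fix C assume C: "C \<in> rcosets H"
    have "C #> h1 \<in> rcosets H" using r_coset_in_rcosets[OF H(1) C h(1)] .
    then have "(\<lambda>n. (walk_prob n (C #> h1 #> h2) - walk_prob n (C #> h1))
        + (walk_prob n (C #> h1) - walk_prob n C)) \<longlonglongrightarrow> 0 + 0"
      using eng.IH C by (intro tendsto_add) auto
    moreover have "C #> (h1 \<otimes> h2) = C #> h1 #> h2"
      using rcosets_subset_carrier[OF C] h by (simp add: coset_mult_assoc)
    ultimately show "(\<lambda>n. walk_prob n (C #> (h1 \<otimes> h2)) - walk_prob n C) \<longlonglongrightarrow> 0" by simp
  qed
qed

lemma walk_prob_subgroup_tendsto: "(\<lambda>n. walk_prob n H) \<longlonglongrightarrow> 1 / real (card (rcosets H))"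
proof -
  define m where "m = real (card (rcosets H))"
  have HH: "H \<in> rcosets H" using subgroup.subgroup_in_rcosets[OF H(1) is_group] .
  then have m: "m > 0" unfolding m_def using H(2) by (auto simp: card_gt_0_iff)
  have each: "(\<lambda>n. walk_prob n H - walk_prob n C) \<longlonglongrightarrow> 0" if C: "C \<in> rcosets H" for C
  proof -
    obtain g where g: "g \<in> carrier G" "C = H #> g" using C unfolding RCOSETS_def by blast
    then have "(\<lambda>n. - (walk_prob n (H #> g) - walk_prob n H)) \<longlonglongrightarrow> - 0"
      using walk_prob_r_coset_generate_tendsto HH generate_S by (intro tendsto_minus) auto
    then show ?thesis using g by simp
  qed
  have "(\<lambda>n. \<Sum>C\<in>rcosets H. walk_prob n H - walk_prob n C) \<longlonglongrightarrow> (\<Sum>C\<in>rcosets H. 0)"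
    by (intro tendsto_sum each)
  moreover have "(\<Sum>C\<in>rcosets H. walk_prob n H - walk_prob n C) = m * walk_prob n H - 1" for n
    using sum_walk_prob_rcosets[of n] unfolding m_def by (simp add: sum_subtractf)
  ultimately have "(\<lambda>n. (m * walk_prob n H - 1 + 1) / m) \<longlonglongrightarrow> (0 + 1) / m"
    using m by (intro tendsto_intros) auto
  then show ?thesis using m unfolding m_def by simp
qed

end

text \<open>For infinite index, \<open>card\<close> is 0 and so is the right-hand side.\<close>

lemma walk_prob_Inter_tendsto:
  assumes F: "\<And>N. N \<in> F \<Longrightarrow> fin_index_normal G N" "carrier G \<in> F"
  shows "(\<lambda>n. walk_prob n (\<Inter>F)) \<longlonglongrightarrow> 1 / real (card (rcosets (\<Inter>F)))"
proof (cases "finite (rcosets (\<Inter>F))")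
  case True
  have "subgroup (\<Inter>F) G"
    using F normal_Inter normal_imp_subgroup unfolding fin_index_normal_def by blast
  then show ?thesis using walk_prob_subgroup_tendsto True by blast
next
  case False
  show ?thesis
  proof (rule order_tendstoI)
    fix a :: real assume "a < 1 / real (card (rcosets (\<Inter>F)))"
    then show "\<forall>\<^sub>F n in sequentially. a < walk_prob n (\<Inter>F)"
      using False by (intro always_eventually allI less_le_trans[OF _ measure_nonneg]) simp
  next
    fix a :: real assume "1 / real (card (rcosets (\<Inter>F))) < a"
    then have a: "a > 0" using False by simp
    obtain M :: nat where M: "1 / a < M" using reals_Archimedean2 by blast
    then have "M > 0" using a by (cases "M = 0") (auto simp: field_simps)
    obtain K where K: "fin_index_normal G K" "\<Inter>F \<subseteq> K" "M \<le> card (rcosets K)"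
      using ex_fin_index_normal_index_ge[OF F False] by blast
    then have sK: "subgroup K G" "finite (rcosets K)"
      using normal_imp_subgroup unfolding fin_index_normal_def by auto
    have "1 / real (card (rcosets K)) \<le> 1 / real M" using K(3) \<open>M > 0\<close> by (intro divide_left_mono) auto
    also have "\<dots> < a" using M a \<open>M > 0\<close> by (simp add: field_simps)
    finally have ev: "\<forall>\<^sub>F n in sequentially. walk_prob n K < a"
      using order_tendstoD(2)[OF walk_prob_subgroup_tendsto[OF sK]] by blast
    have mono: "walk_prob n (\<Inter>F) \<le> walk_prob n K" for n
      using K(2) by (rule measure_pmf.finite_measure_mono) simp
    show "\<forall>\<^sub>F n in sequentially. walk_prob n (\<Inter>F) < a"
      using ev by (rule eventually_mono) (rule le_less_trans[OF mono])
  qed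
qed

lemma walk_prob_Lambda_tendsto:
  assumes "k \<ge> 1"
  shows "(\<lambda>n. walk_prob n (Lambda G k)) \<longlonglongrightarrow> 1 / real (card (rcosets (Lambda G k)))"
proof -
  have "carrier G \<in> {N. fin_index_normal G N \<and> card (rcosets N) \<le> k}"
    using fin_index_normal_carrier rcosets_carrier assms by simp
  then show ?thesis unfolding Lambda_def by (intro walk_prob_Inter_tendsto) auto
qed

lemma walk_prob_one_tendsto_zero:
  assumes "residually_finite G" "infinite (carrier G)"
  shows "(\<lambda>n. walk_prob n {\<one>}) \<longlonglongrightarrow> 0"
proof -
  have "(\<lambda>n. walk_prob n (\<Inter>{N. fin_index_normal G N}))
      \<longlonglongrightarrow> 1 / real (card (rcosets (\<Inter>{N. fin_index_normal G N})))"
    using fin_index_normal_carrier by (intro walk_prob_Inter_tendsto) auto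
  then show ?thesis
    using infinite_rcosets_one[OF assms(2)] unfolding Inter_fin_index_normal_eq_one[OF assms(1)]
    by simp
qed

lemma walk_prob_Lambda_diff_one_tendsto:
  assumes "residually_finite G" "infinite (carrier G)" "k \<ge> 1"
  shows "(\<lambda>n. walk_prob n (Lambda G k - {\<one>})) \<longlonglongrightarrow> 1 / real (card (rcosets (Lambda G k)))"
proof -
  have "walk_prob n (Lambda G k - {\<one>}) = walk_prob n (Lambda G k) - walk_prob n {\<one>}" for n
    using one_in_Lambda by (subst measure_pmf.finite_measure_Diff) auto
  then show ?thesis
    using tendsto_diff[OF walk_prob_Lambda_tendsto[OF assms(3)] walk_prob_one_tendsto_zero[OF assms(1,2)]]
    by simp
qed

lemma walk_prob_ne_one_tendsto:
  assumes "residually_finite G" "infinite (carrier G)"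
  shows "(\<lambda>n. walk_prob n (carrier G - {\<one>})) \<longlonglongrightarrow> 1"
proof -
  have "walk_prob n (carrier G - {\<one>}) = 1 - walk_prob n {\<one>}" for n
    using walk_prob_carrier by (subst measure_pmf.finite_measure_Diff) auto
  then show ?thesis
    using tendsto_diff[OF tendsto_const walk_prob_one_tendsto_zero[OF assms]] by simp
qed

lemma expectation_depth_eq:
  assumes "residually_finite G"
  shows "measure_pmf.expectation (lazy_walk G S n) (\<lambda>x. real (depth G x))
    = 2 * walk_prob n (carrier G - {\<one>}) + suminf (\<lambda>k. walk_prob n (Lambda G (k + 2) - {\<one>}))"
proof -
  define q where "q k = walk_prob n (Lambda G k - {\<one>})" for k
  have tail: "walk_prob n {x. k < depth G x} = q k" for k
  proof -
    have "{x. k < depth G x} \<inter> carrier G = (Lambda G k - {\<one>}) \<inter> carrier G"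
      using depth_gt_iff[OF assms] by blast
    then show ?thesis unfolding q_def by (metis walk_prob_Int_carrier)
  qed
  let ?E = "measure_pmf.expectation (lazy_walk G S n) (\<lambda>x. real (depth G x))"
  have "q sums ?E"
    using prob_gt_sums_expectation_nat[OF finite_set_lazy_walk, of n "depth G"] unfolding tail .
  then have "(\<lambda>k. q (k + 2)) sums (?E - (q 0 + q 1))"
    using sums_split_initial_segment[of q _ 2] by (simp add: numeral_2_eq_2)
  moreover have "q k = walk_prob n (carrier G - {\<one>})" if "k \<le> 1" for k
  proof -
    have "(Lambda G k - {\<one>}) \<inter> carrier G = (carrier G - {\<one>}) \<inter> carrier G"
      using carrier_subset_Lambda[OF that] by blast
    then show ?thesis unfolding q_def by (metis walk_prob_Int_carrier)
  qed
  ultimately show ?thesis unfolding q_def by (simp add: sums_iff)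
qed

end

theorem proposition4p3:
  fixes G :: "('a, 'b) monoid_scheme" and S :: "'a set" and p :: "nat \<Rightarrow> real"
  assumes "group G"
    and "infinite (carrier G)"
    and "residually_finite G"
    and "finite S" and "S \<subseteq> carrier G"
    and "\<And>s. s \<in> S \<Longrightarrow> inv\<^bsub>G\<^esub> s \<in> S"
    and "generate G S = carrier G"
    and "\<And>k. k \<ge> 2 \<Longrightarrow> p k > 0"
    and "summable (\<lambda>k. p (k + 2))"
    and "\<And>n k. n \<ge> 1 \<Longrightarrow> k \<ge> 2 \<Longrightarrow>
           measure_pmf.prob (lazy_walk G S n) (Lambda G k - {\<one>\<^bsub>G\<^esub>}) \<le> p k"
  shows "summable (\<lambda>k. 1 / real (card (rcosets\<^bsub>G\<^esub> (Lambda G (k + 2)))))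
    \<and> (\<lambda>n. measure_pmf.expectation (lazy_walk G S n) (\<lambda>x. real (depth G x)))
        \<longlonglongrightarrow> 2 + suminf (\<lambda>k. 1 / real (card (rcosets\<^bsub>G\<^esub> (Lambda G (k + 2)))))"
proof -
  interpret group G by fact
  have "S \<noteq> {}"
  proof
    assume "S = {}"
    then have "carrier G = {\<one>\<^bsub>G\<^esub>}" using assms(7) generate_empty by simp
    then show False using assms(2) by simp
  qed
  then interpret lazy_walk_setting G S by unfold_locales (use assms in auto)
  define a where "a k n = walk_prob n (Lambda G (k + 2) - {\<one>\<^bsub>G\<^esub>})" for k n
  define b where "b k = 1 / real (card (rcosets\<^bsub>G\<^esub> (Lambda G (k + 2))))" for k
  have lim: "(\<lambda>n. a k n) \<longlonglongrightarrow> b k" for k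
    unfolding a_def b_def using walk_prob_Lambda_diff_one_tendsto[OF assms(3,2)] by simp
  have bound: "\<forall>\<^sub>F (k, n) in sequentially \<times>\<^sub>F sequentially. norm (a k n) \<le> p (k + 2)"
    unfolding eventually_prod_sequentially a_def using assms(10) by (intro exI[of _ 1]) auto
  have norm_b: "summable (\<lambda>k. norm (b k))"
    and tannery: "(\<lambda>n. suminf (\<lambda>k. a k n)) \<longlonglongrightarrow> suminf b"
    using tannerys_theorem[OF lim bound assms(9)] by simp_all
  from norm_b have "summable b" by (rule summable_norm_cancel)
  moreover have "(\<lambda>n. 2 * walk_prob n (carrier G - {\<one>\<^bsub>G\<^esub>}) + suminf (\<lambda>k. a k n))
      \<longlonglongrightarrow> 2 * 1 + suminf b"
    using walk_prob_ne_one_tendsto[OF assms(3,2)] tannery by (intro tendsto_intros)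
  ultimately show ?thesis using expectation_depth_eq[OF assms(3)] unfolding a_def b_def by simp
qed

end
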